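(* Let $n\ge 3$ and let $a(s)=s^n+a_1s^{n-1}+\cdots+a_n$ and $b(s)=s^n+b_1s^{n-1}+\cdots+b_n$ be real Hurwitz stable polynomials. Suppose $\Omega^a\cap\Omega^b\neq\emptyset$ (sets defined in the context), take $(x_1,\dots,x_{n-1})\in\Omega^a\cap\Omega^b$, and for $\varepsilon>0$ let $c_\varepsilon(s):=s^{n-1}+(x_1-\varepsilon)s^{n-2}+x_2s^{n-3}+\cdots+x_{n-2}s+(x_{n-1}+\varepsilon)$. Then there exists $\varepsilon_0>0$ such that for every $\varepsilon\in(0,\varepsilon_0)$ we have $\mathrm{Re}\left[\frac{c_\varepsilon(j\omega)}{a(j\omega)}\right]>0$ and $\mathrm{Re}\left[\frac{c_\varepsilon(j\omega)}{b(j\omega)}\right]>0$ for all $\omega\in\mathbb{R}$.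
   Context: A real polynomial is Hurwitz stable if all its roots lie in the open left half-plane. For $x=(x_1,\dots,x_{n-1})\in\mathbb{R}^{n-1}$ and $l=1,\dots,n$ define $c_l(x):=\sum_{j=0}^{n}(-1)^{l+j}a_jx_{2l-j-1}$ and $d_l(x):=\sum_{j=0}^{n}(-1)^{l+j}b_jx_{2l-j-1}$, with $a_0=b_0=1$, $x_0=1$, $a_i=b_i=0$ if $i<0$ or $i>n$, and $x_i=0$ if $i<0$ or $i>n-1$. For $k\in\{1,\dots,n-2\}$ let $\Omega^a_{ek}:=\{x: c_{k+1}^2-4c_kc_{k+2}<0,\ c_l=0 \text{ for } l\in\{1,\dots,n\}\setminus\{k,k+1,k+2\}\}$ and $\Omega^b_{ek}:=\{x: d_{k+1}^2-4d_kd_{k+2}<0,\ d_l=0 \text{ for } l\in\{1,\dots,n\}\setminus\{k,k+1,k+2\}\}$. For points $A,B\in\mathbb{R}^{n-1}$, $(A,B)$ denotes the open line segment joining $A$ and $B$ (endpoints excluded). Define $\Omega^a$ as the union, over all pairs $1\le i<j\le n-2$ and all points $A_i\in\Omega^a_{ei}$, $A_j\in\Omega^a_{ej}$, of the open segments $(A_i,A_j)$; define $\Omega^b$ analogously using $\Omega^b_{ei},\Omega^b_{ej}$. *)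

theory Defs
  imports Complex_Main
begin

definition mpoly :: "nat \<Rightarrow> (nat \<Rightarrow> real) \<Rightarrow> complex \<Rightarrow> complex" where
  "mpoly n a z = z ^ n + (\<Sum>j=1..n. complex_of_real (a j) * z ^ (n - j))"

definition hurwitz_stable :: "nat \<Rightarrow> (nat \<Rightarrow> real) \<Rightarrow> bool" where
  "hurwitz_stable n a \<longleftrightarrow> (\<forall>z. mpoly n a z = 0 \<longrightarrow> Re z < 0)"

definition acoef :: "nat \<Rightarrow> (nat \<Rightarrow> real) \<Rightarrow> int \<Rightarrow> real" where
  "acoef n a i = (if i = 0 then 1 else if 1 \<le> i \<and> i \<le> int n then a (nat i) else 0)"

definition xcoef :: "nat \<Rightarrow> (nat \<Rightarrow> real) \<Rightarrow> int \<Rightarrow> real" where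
  "xcoef n x i = (if i = 0 then 1 else if 1 \<le> i \<and> i \<le> int n - 1 then x (nat i) else 0)"

definition cfun :: "nat \<Rightarrow> (nat \<Rightarrow> real) \<Rightarrow> (nat \<Rightarrow> real) \<Rightarrow> nat \<Rightarrow> real" where
  "cfun n a x l = (\<Sum>j=0..n. (-1) ^ (l + j) * acoef n a (int j) * xcoef n x (2 * int l - int j - 1))"

text \<open>Points of R^(n-1) are functions nat \<Rightarrow> real of which only coordinates 1..n-1 matter.\<close>
definition Omega_e :: "nat \<Rightarrow> (nat \<Rightarrow> real) \<Rightarrow> nat \<Rightarrow> (nat \<Rightarrow> real) set" where
  "Omega_e n a k = {x. (cfun n a x (k+1))\<^sup>2 - 4 * cfun n a x k * cfun n a x (k+2) < 0 \<and>
                       (\<forall>l\<in>{1..n} - {k, k+1, k+2}. cfun n a x l = 0)}"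

definition in_open_seg :: "nat \<Rightarrow> (nat \<Rightarrow> real) \<Rightarrow> (nat \<Rightarrow> real) \<Rightarrow> (nat \<Rightarrow> real) \<Rightarrow> bool" where
  "in_open_seg n A B x \<longleftrightarrow> (\<exists>k\<in>{1..n-1}. A k \<noteq> B k) \<and>
     (\<exists>t::real. 0 < t \<and> t < 1 \<and> (\<forall>k\<in>{1..n-1}. x k = (1 - t) * A k + t * B k))"

definition Omega :: "nat \<Rightarrow> (nat \<Rightarrow> real) \<Rightarrow> (nat \<Rightarrow> real) set" where
  "Omega n a = {x. \<exists>i j A B. 1 \<le> i \<and> i < j \<and> j \<le> n - 2 \<and>
                    A \<in> Omega_e n a i \<and> B \<in> Omega_e n a j \<and> in_open_seg n A B x}"

definition ceps :: "nat \<Rightarrow> (nat \<Rightarrow> real) \<Rightarrow> real \<Rightarrow> complex \<Rightarrow> complex" where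
  "ceps n x \<epsilon> z = z ^ (n - 1) + complex_of_real (x 1 - \<epsilon>) * z ^ (n - 2)
     + (\<Sum>k=2..n-2. complex_of_real (x k) * z ^ (n - 1 - k)) + complex_of_real (x (n - 1) + \<epsilon>)"

end

theory Submission
  imports Defs "HOL-Complex_Analysis.Conformal_Mappings"
begin

(* For a monic y of degree n - 1, Re (y(i w) * cnj (a(i w))) is the polynomial
   sum_l c_l(y) w^(2(n-l)) in w^2, and the c_l depend affinely on the coefficients of y.
   On Omega^a_ek this polynomial is u^(n-k-2) times a quadratic with negative discriminant.
   Since y/a is holomorphic on the closed right half-plane and behaves like 1/z at infinity,
   the maximum principle forbids Re (y/a) <= 0 on the whole imaginary axis, so the quadratic
   is positive. By affinity the polynomial of a point of Omega^a is nonnegative on [0, oo)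
   and positive on (0, oo). Passing from x to c_eps adds eps times a polynomial that equals
   a_n > 0 at 0 (Hurwitz stability) and has leading coefficient 1, and a compactness
   argument keeps the sum positive for all small eps > 0. *)

lemma sum_powers_div_power_tendsto:
  fixes c :: "nat \<Rightarrow> 'a::real_normed_field"
  shows "((\<lambda>z. (\<Sum>k\<le>m. c k * z ^ (m - k)) / z ^ m) \<longlongrightarrow> c 0) at_infinity"
proof -
  have "((\<lambda>z. \<Sum>k\<le>m. c k * inverse z ^ k) \<longlongrightarrow> (\<Sum>k\<le>m. c k * 0 ^ k)) at_infinity"
    by (intro tendsto_intros tendsto_inverse_0)
  moreover have "(\<Sum>k\<le>m. c k * 0 ^ k) = c 0"
    by (simp add: sum.atMost_shift)
  moreover have "\<forall>\<^sub>F z in at_infinity. (\<Sum>k\<le>m. c k * inverse z ^ k) = (\<Sum>k\<le>m. c k * z ^ (m - k)) / z ^ m"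
    using eventually_not_equal_at_infinity[of 0]
  proof (rule eventually_mono)
    fix z :: 'a assume "z \<noteq> 0"
    then show "(\<Sum>k\<le>m. c k * inverse z ^ k) = (\<Sum>k\<le>m. c k * z ^ (m - k)) / z ^ m"
      unfolding sum_divide_distrib by (intro sum.cong) (auto simp: power_diff power_inverse divide_inverse)
  qed
  ultimately show ?thesis
    using Lim_transform_eventually by fastforce
qed

lemma eventually_sum_powers_pos:
  fixes c :: "nat \<Rightarrow> real"
  assumes "1 \<le> n" and "0 < c 1"
  shows "\<forall>\<^sub>F u in at_top. 0 < (\<Sum>l=1..n. c l * u ^ (n - l))"
proof -
  have shift: "(\<Sum>l=1..n. c l * u ^ (n - l)) = (\<Sum>k\<le>n-1. c (Suc k) * u ^ (n - 1 - k))" for u :: real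
    using assms(1) sum.shift_bounds_cl_Suc_ivl[of "\<lambda>l. c l * u ^ (n - l)" 0 "n - 1"]
    by (simp add: atLeast0AtMost)
  have "((\<lambda>u. (\<Sum>k\<le>n-1. c (Suc k) * u ^ (n - 1 - k)) / u ^ (n - 1)) \<longlongrightarrow> c 1) at_top"
    using tendsto_mono[OF at_top_le_at_infinity sum_powers_div_power_tendsto[of "\<lambda>k. c (Suc k)" "n - 1"]]
    by simp
  then have "\<forall>\<^sub>F u in at_top. 0 < (\<Sum>k\<le>n-1. c (Suc k) * u ^ (n - 1 - k)) / u ^ (n - 1)"
    using assms(2) by (rule order_tendstoD)
  with eventually_gt_at_top[of 0] show ?thesis
    by eventually_elim (auto simp: shift[simplified] zero_less_divide_iff)
qed

lemma mpoly_acoef: "mpoly n a z = (\<Sum>j\<le>n. of_real (acoef n a (int j)) * z ^ (n - j))"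
proof -
  have "{..n} = insert 0 {1..n}" by auto
  then show ?thesis
    by (simp add: mpoly_def acoef_def)
qed

lemma xcoef_eq_acoef: "1 \<le> n \<Longrightarrow> xcoef n = acoef (n - 1)"
  by (auto simp: fun_eq_iff xcoef_def acoef_def)

lemma mpoly_div_power_tendsto: "((\<lambda>z. mpoly n a z / z ^ n) \<longlongrightarrow> 1) at_infinity"
  using sum_powers_div_power_tendsto[of "\<lambda>j. complex_of_real (acoef n a (int j))" n]
  by (simp add: mpoly_acoef acoef_def)

lemma hurwitz_stable_nonzero: "hurwitz_stable n a \<Longrightarrow> 0 \<le> Re z \<Longrightarrow> mpoly n a z \<noteq> 0"
  unfolding hurwitz_stable_def by force

lemma hurwitz_stable_last_coeff_pos:
  assumes stable: "hurwitz_stable n a" and "1 \<le> n"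
  shows "0 < a n"
proof (rule ccontr)
  define f where "f t = t ^ n + (\<Sum>j=1..n. a j * t ^ (n - j))" for t
  have mpoly_f: "mpoly n a (of_real t) = of_real (f t)" for t
    by (simp add: f_def mpoly_def)
  have "f 0 = a n"
    using \<open>1 \<le> n\<close> by (cases n) (auto simp: f_def power_0_left intro!: sum.neutral)
  moreover have "f 0 \<noteq> 0"
    using hurwitz_stable_nonzero[OF stable, of 0] mpoly_f[of 0] by auto
  moreover assume "\<not> 0 < a n"
  ultimately have "f 0 < 0" by simp
  have "((\<lambda>t. mpoly n a (of_real t) / of_real t ^ n) \<longlongrightarrow> 1) at_top"
    by (rule filterlim_compose[OF mpoly_div_power_tendsto filterlim_of_real_at_infinity])
  then have "((\<lambda>t. f t / t ^ n) \<longlongrightarrow> 1) at_top"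
    using tendsto_of_real_iff[of "\<lambda>t. f t / t ^ n" 1 at_top, where 'a=complex]
    by (simp add: mpoly_f)
  then have "\<forall>\<^sub>F t in at_top. 0 < f t / t ^ n"
    by (rule order_tendstoD) simp
  with eventually_gt_at_top[of 0] obtain t where "0 < t" "0 < f t / t ^ n"
    by (metis (mono_tags, lifting) eventually_at_top_linorder eventually_conj_iff order.refl)
  then have "0 < f t" by (simp add: zero_less_divide_iff)
  moreover have "continuous_on {0..t} f"
    unfolding f_def by (intro continuous_intros)
  ultimately obtain s where "0 \<le> s" "f s = 0"
    using IVT'[of f 0 0 t] \<open>f 0 < 0\<close> \<open>0 < t\<close> by auto
  then show False
    using hurwitz_stable_nonzero[OF stable, of "of_real s"] mpoly_f[of s] by simp
qed

lemma frontier_half_disc_subset: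
  "frontier ({z. 0 \<le> Re z} \<inter> cball 0 r) \<subseteq> {z. Re z = 0} \<union> sphere 0 r"
proof
  let ?S = "{z. 0 \<le> Re z} \<inter> cball 0 r"
  fix z assume z: "z \<in> frontier ?S"
  have "closed ?S"
    by (intro closed_Int closed_halfspace_Re_ge closed_cball)
  then have "z \<in> ?S" "z \<notin> interior ?S"
    using z frontier_subset_closed by (auto simp: frontier_def)
  moreover have "{z. 0 < Re z} \<inter> ball 0 r \<subseteq> interior ?S"
    by (rule interior_maximal) (auto intro: open_Int open_halfspace_Re_gt)
  ultimately have "z \<notin> {z. 0 < Re z} \<inter> ball 0 r"
    by blast
  with \<open>z \<in> ?S\<close> show "z \<in> {z. Re z = 0} \<union> sphere 0 r"
    by auto
qed

lemma exists_Re_pos_on_imaginary_axis: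
  fixes h :: "complex \<Rightarrow> complex"
  assumes holo: "h holomorphic_on {z. 0 \<le> Re z}"
    and lim: "((\<lambda>z. z * h z) \<longlongrightarrow> 1) at_infinity"
  shows "\<exists>\<omega>. 0 < Re (h (\<i> * of_real \<omega>))"
proof (rule ccontr)
  assume "\<not> ?thesis"
  then have imag_nonpos: "Re (h (\<i> * of_real \<omega>)) \<le> 0" for \<omega>
    by (simp add: not_less)
  obtain R where R: "\<And>z. R \<le> norm z \<Longrightarrow> norm (z * h z - 1) < 1/2"
    using tendstoD[OF lim, of "1/2"] by (auto simp: eventually_at_infinity dist_norm)
  define r where "r = max R 1"
  have "r \<ge> 1" "r \<ge> R"
    by (auto simp: r_def)
  let ?D = "{z. 0 \<le> Re z} \<inter> cball 0 (4 * r)"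
  have "R \<le> norm (of_real r :: complex)"
    using \<open>r \<ge> R\<close> \<open>r \<ge> 1\<close> by simp
  from R[OF this] have "norm (1 - of_real r * h (of_real r)) < 1/2"
    by (simp add: norm_minus_commute)
  then have "Re (of_real r * h (of_real r)) > 1/2"
    using complex_Re_le_cmod[of "1 - of_real r * h (of_real r)"] by simp
  then have "Re (h (of_real r)) > 1 / (2 * r)"
    using \<open>r \<ge> 1\<close> by (simp add: field_simps)
  txt \<open>Maximum principle on the right half-disc of radius \<open>4 r\<close>: \<open>Re h \<le> 0\<close> on the diameter
    and \<open>\<bar>h\<bar> < 3 / (8 r)\<close> on the arc.\<close>
  moreover have "Re (h (of_real r)) \<le> 3 / (8 * r)"
  proof (rule maximum_real_frontier[of h ?D])
    have "interior ?D \<subseteq> {z. 0 \<le> Re z}"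
      using interior_subset by blast
    then show "h holomorphic_on interior ?D"
      by (rule holomorphic_on_subset[OF holo])
    have "closure ?D \<subseteq> {z. 0 \<le> Re z}"
      by (rule closure_minimal) (auto simp: closed_halfspace_Re_ge)
    then show "continuous_on (closure ?D) h"
      by (rule continuous_on_subset[OF holomorphic_on_imp_continuous_on[OF holo]])
  next
    fix z assume "z \<in> frontier ?D"
    then consider "Re z = 0" | "norm z = 4 * r"
      using frontier_half_disc_subset by fastforce
    then show "Re (h z) \<le> 3 / (8 * r)"
    proof cases
      case 1
      then have "z = \<i> * of_real (Im z)"
        by (simp add: complex_eq_iff)
      then show ?thesis
        using imag_nonpos[of "Im z"] \<open>r \<ge> 1\<close> by (smt (verit) divide_pos_pos)
    next
      case 2
      then have "norm (z * h z - 1) < 1/2"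
        using R \<open>r \<ge> R\<close> \<open>r \<ge> 1\<close> by simp
      then have "norm z * norm (h z) < 3/2"
        using norm_triangle_ineq2[of "z * h z" 1] by (simp add: norm_mult)
      then have "norm (h z) < 3 / (8 * r)"
        using 2 \<open>r \<ge> 1\<close> by (simp add: field_simps)
      then show ?thesis
        using complex_Re_le_cmod[of "h z"] by linarith
    qed
  qed (use \<open>r \<ge> 1\<close> in auto)
  ultimately show False
    using \<open>r \<ge> 1\<close> by (simp add: field_simps)
qed

definition cfun_poly :: "nat \<Rightarrow> (nat \<Rightarrow> real) \<Rightarrow> (nat \<Rightarrow> real) \<Rightarrow> real \<Rightarrow> real" where
  "cfun_poly n a y u = (\<Sum>l=1..n. cfun n a y l * u ^ (n - l))"

(* Only monomials of even total degree 2 (n - l) have a real part; matching i = 2 l - j - 1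
   is where the index of x in c_l comes from. *)
lemma Re_imag_power_mult_cnj_power:
  assumes "i < n" "j \<le> n"
  shows "Re ((\<i> * of_real \<omega>) ^ (n - 1 - i) * cnj (\<i> * of_real \<omega>) ^ (n - j)) =
    (\<Sum>l=1..n. if int i = 2 * int l - int j - 1 then (-1) ^ (l + j) * \<omega> ^ (2 * (n - l)) else 0)"
proof -
  have power_prod: "(\<i> * of_real \<omega>) ^ p * cnj (\<i> * of_real \<omega>) ^ q = of_real ((-1) ^ q * \<omega> ^ (p + q)) * \<i> ^ (p + q)"
    for p q
    by (simp add: power_mult_distrib power_add power_minus' algebra_simps)
  show ?thesis
  proof (cases "even (i + j)")
    case True
    then have "odd (n - 1 - i + (n - j))"
      using assms by presburger
    then obtain k where k: "n - 1 - i + (n - j) = Suc (2 * k)"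
      by (metis oddE Suc_eq_plus1)
    have "\<i> ^ (n - 1 - i + (n - j)) = \<i> * (-1) ^ k"
      unfolding k by (simp add: power_mult)
    moreover have "int i \<noteq> 2 * int l - int j - 1" for l
      using True by presburger
    ultimately show ?thesis
      unfolding power_prod by simp
  next
    case False
    define l0 where "l0 = (i + j + 1) div 2"
    have l0: "2 * l0 = i + j + 1"
      using False unfolding l0_def by presburger
    have "1 \<le> l0" "l0 \<le> n" and exponent: "n - 1 - i + (n - j) = 2 * (n - l0)"
      using l0 assms by linarith+
    have "(n - j + (n - l0)) + (l0 + j) = 2 * n"
      using \<open>l0 \<le> n\<close> assms by linarith
    then have parity: "even (n - j + (n - l0)) \<longleftrightarrow> even (l0 + j)"
      by (metis even_add even_mult_iff even_numeral)
    have sign: "(-1::real) ^ (n - j) * (-1) ^ (n - l0) = (-1) ^ (l0 + j)"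
      unfolding power_add[symmetric] by (simp only: minus_one_power_iff parity)
    have "int i = 2 * int l - int j - 1 \<longleftrightarrow> l = l0" for l
      using l0 by linarith
    then have "(\<Sum>l=1..n. if int i = 2 * int l - int j - 1 then (-1) ^ (l + j) * \<omega> ^ (2 * (n - l)) else 0) =
        (-1) ^ (l0 + j) * \<omega> ^ (2 * (n - l0))"
      using \<open>1 \<le> l0\<close> \<open>l0 \<le> n\<close> by simp
    moreover have "\<i> ^ (2 * (n - l0)) = (-1) ^ (n - l0)"
      by (simp add: power_mult)
    ultimately show ?thesis
      unfolding power_prod exponent by (simp flip: sign)
  qed
qed

lemma sum_xcoef_delta:
  assumes "1 \<le> n"
  shows "(\<Sum>i<n. if int i = m then xcoef n y (int i) else 0) = xcoef n y m"
proof (cases "0 \<le> m \<and> m < int n")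
  case True
  then have "(\<Sum>i<n. if int i = m then xcoef n y (int i) else 0) = (\<Sum>i<n. if i = nat m then xcoef n y m else 0)"
    by (intro sum.cong) auto
  with True show ?thesis
    by (simp add: nat_less_iff)
next
  case False
  then show ?thesis
    using assms by (auto simp: xcoef_def)
qed

lemma Re_mpoly_mult_cnj_mpoly:
  assumes "1 \<le> n"
  shows "Re (mpoly (n - 1) y (\<i> * of_real \<omega>) * cnj (mpoly n a (\<i> * of_real \<omega>))) = cfun_poly n a y (\<omega>\<^sup>2)"
proof -
  have Re_complex_of_real_mult: "Re (of_real c * z) = c * Re z" for c z
    by simp
  define w where "w = \<i> * complex_of_real \<omega>"
  define X where "X i = xcoef n y (int i)" for i
  define A where "A j = acoef n a (int j)" for j
  define \<delta> where "\<delta> i j l = (if int i = 2 * int l - int j - 1 then (-1) ^ (l + j) * \<omega> ^ (2 * (n - l)) else 0)"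
    for i j l :: nat
  have "{..n - 1} = {..<n}"
    using assms by auto
  then have "mpoly (n - 1) y w = (\<Sum>i<n. of_real (X i) * w ^ (n - 1 - i))"
    by (simp add: mpoly_acoef xcoef_eq_acoef[OF assms] X_def)
  moreover have "cnj (mpoly n a w) = (\<Sum>j\<le>n. of_real (A j) * cnj w ^ (n - j))"
    by (simp add: mpoly_acoef A_def)
  ultimately have "mpoly (n - 1) y w * cnj (mpoly n a w) =
      (\<Sum>i<n. \<Sum>j\<le>n. of_real (X i * A j) * (w ^ (n - 1 - i) * cnj w ^ (n - j)))"
    by (simp only: sum_product) (simp add: mult_ac)
  then have "Re (mpoly (n - 1) y w * cnj (mpoly n a w)) =
      (\<Sum>i<n. \<Sum>j\<le>n. Re (of_real (X i * A j) * (w ^ (n - 1 - i) * cnj w ^ (n - j))))"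
    by (simp only: Re_sum)
  also have "\<dots> = (\<Sum>i<n. \<Sum>j\<le>n. \<Sum>l=1..n. X i * A j * \<delta> i j l)"
  proof (intro sum.cong refl)
    fix i j assume "i \<in> {..<n}" "j \<in> {..n}"
    then have "Re (w ^ (n - 1 - i) * cnj w ^ (n - j)) = (\<Sum>l=1..n. \<delta> i j l)"
      unfolding w_def \<delta>_def by (intro Re_imag_power_mult_cnj_power) auto
    then show "Re (of_real (X i * A j) * (w ^ (n - 1 - i) * cnj w ^ (n - j))) = (\<Sum>l=1..n. X i * A j * \<delta> i j l)"
      by (simp only: Re_complex_of_real_mult sum_distrib_left)
  qed
  also have "\<dots> = (\<Sum>l=1..n. \<Sum>j\<le>n. \<Sum>i<n. X i * A j * \<delta> i j l)"
    by (subst sum.swap, subst (2) sum.swap, simp add: sum.swap[of _ "{..<n}"])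
  also have "\<dots> = (\<Sum>l=1..n. \<Sum>j\<le>n. (-1) ^ (l + j) * A j * xcoef n y (2 * int l - int j - 1) * \<omega> ^ (2 * (n - l)))"
  proof (intro sum.cong refl)
    fix l j
    have "(\<Sum>i<n. X i * A j * \<delta> i j l) =
        (\<Sum>i<n. if int i = 2 * int l - int j - 1 then X i else 0) * ((-1) ^ (l + j) * A j * \<omega> ^ (2 * (n - l)))"
      unfolding \<delta>_def sum_distrib_right by (intro sum.cong) auto
    then show "(\<Sum>i<n. X i * A j * \<delta> i j l) = (-1) ^ (l + j) * A j * xcoef n y (2 * int l - int j - 1) * \<omega> ^ (2 * (n - l))"
      unfolding X_def sum_xcoef_delta[OF assms] by simp
  qed
  also have "\<dots> = (\<Sum>l=1..n. cfun n a y l * \<omega> ^ (2 * (n - l)))"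
    by (simp add: cfun_def A_def sum_distrib_right atLeast0AtMost)
  finally show ?thesis
    by (simp add: w_def cfun_poly_def power_mult)
qed

lemma xcoef_affine:
  assumes "\<forall>k\<in>{1..n-1}. x k = y k + s * (z k - w k)"
  shows "xcoef n x i = xcoef n y i + s * (xcoef n z i - xcoef n w i)"
proof -
  have "1 \<le> i \<Longrightarrow> i \<le> int n - 1 \<Longrightarrow> nat i \<in> {1..n-1}"
    by auto
  then show ?thesis
    using assms by (auto simp: xcoef_def)
qed

lemma cfun_poly_affine:
  assumes "\<forall>k\<in>{1..n-1}. x k = y k + s * (z k - w k)"
  shows "cfun_poly n a x u = cfun_poly n a y u + s * (cfun_poly n a z u - cfun_poly n a w u)"
  by (simp add: cfun_poly_def cfun_def xcoef_affine[OF assms] algebra_simps sum.distrib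
      sum_subtractf sum_distrib_left)

lemma cfun_1:
  assumes "2 \<le> n"
  shows "cfun n a y 1 = a 1 - y 1"
proof -
  have "{0..n} = insert 0 (insert 1 {2..n})"
    using assms by auto
  moreover have "(\<Sum>j=2..n. (-1) ^ (1 + j) * acoef n a (int j) * xcoef n y (1 - int j)) = 0"
    by (rule sum.neutral) (auto simp: xcoef_def)
  ultimately show ?thesis
    using assms by (simp add: cfun_def acoef_def xcoef_def)
qed

lemma cfun_last:
  assumes "2 \<le> n"
  shows "cfun n a y n = a n * y (n - 1)"
proof -
  have "{0..n} = insert n {..<n}"
    by auto
  moreover have "(\<Sum>j<n. (-1) ^ (n + j) * acoef n a (int j) * xcoef n y (2 * int n - int j - 1)) = 0"
    by (rule sum.neutral) (auto simp: xcoef_def)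
  moreover have "nat (int n - 1) = n - 1"
    using assms by simp
  ultimately show ?thesis
    using assms by (simp add: cfun_def acoef_def xcoef_def)
qed

lemma cfun_poly_at_0: "1 \<le> n \<Longrightarrow> cfun_poly n a y 0 = cfun n a y n"
  by (cases n) (auto simp: cfun_poly_def power_0_left intro!: sum.neutral)

lemma continuous_on_cfun_poly: "continuous_on S (cfun_poly n a y)"
  unfolding cfun_poly_def by (intro continuous_intros)

lemma quadratic_neg_discrim_mult_pos:
  fixes a b c u :: real
  assumes "b\<^sup>2 - 4 * a * c < 0"
  shows "0 < a * (a * u\<^sup>2 + b * u + c)"
proof -
  have "4 * (a * (a * u\<^sup>2 + b * u + c)) = (2 * a * u + b)\<^sup>2 + (4 * a * c - b\<^sup>2)"
    by (simp add: power2_eq_square algebra_simps)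
  with assms zero_le_power2[of "2 * a * u + b"] show ?thesis
    by linarith
qed

lemma exists_cfun_poly_pos:
  assumes stable: "hurwitz_stable n a" and "1 \<le> n"
  shows "\<exists>u\<ge>0. 0 < cfun_poly n a y u"
proof -
  have "(\<lambda>z. mpoly (n - 1) y z / mpoly n a z) holomorphic_on {z. 0 \<le> Re z}"
    using hurwitz_stable_nonzero[OF stable] unfolding mpoly_def by (intro holomorphic_intros) auto
  moreover have "((\<lambda>z. z * (mpoly (n - 1) y z / mpoly n a z)) \<longlongrightarrow> 1) at_infinity"
  proof -
    have "((\<lambda>z. (mpoly (n - 1) y z / z ^ (n - 1)) / (mpoly n a z / z ^ n)) \<longlongrightarrow> 1 / 1) at_infinity"
      by (intro tendsto_divide mpoly_div_power_tendsto) simp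
    moreover have "\<forall>\<^sub>F z in at_infinity.
        (mpoly (n - 1) y z / z ^ (n - 1)) / (mpoly n a z / z ^ n) = z * (mpoly (n - 1) y z / mpoly n a z)"
      using eventually_not_equal_at_infinity[of 0]
    proof (rule eventually_mono)
      fix z :: complex assume "z \<noteq> 0"
      moreover have "z ^ n = z * z ^ (n - 1)"
        using \<open>1 \<le> n\<close> by (cases n) auto
      ultimately show "(mpoly (n - 1) y z / z ^ (n - 1)) / (mpoly n a z / z ^ n) = z * (mpoly (n - 1) y z / mpoly n a z)"
        by (cases "mpoly n a z = 0") (simp_all add: field_simps)
    qed
    ultimately show ?thesis
      by (simp add: Lim_transform_eventually)
  qed
  ultimately obtain \<omega> where "0 < Re (mpoly (n - 1) y (\<i> * of_real \<omega>) / mpoly n a (\<i> * of_real \<omega>))"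
    using exists_Re_pos_on_imaginary_axis by blast
  then have "0 < cfun_poly n a y (\<omega>\<^sup>2)"
    by (simp only: Re_complex_div_gt_0 Re_mpoly_mult_cnj_mpoly[OF \<open>1 \<le> n\<close>])
  then show ?thesis
    by (intro exI[of _ "\<omega>\<^sup>2"]) auto
qed

lemma cfun_poly_Omega_e_pos:
  assumes stable: "hurwitz_stable n a" and k: "1 \<le> k" "k + 2 \<le> n" and A: "A \<in> Omega_e n a k"
  shows "0 \<le> u \<Longrightarrow> 0 \<le> cfun_poly n a A u" and "0 < u \<Longrightarrow> 0 < cfun_poly n a A u"
proof -
  define q where "q u = cfun n a A k * u\<^sup>2 + cfun n a A (k + 1) * u + cfun n a A (k + 2)" for u
  have "\<forall>l\<in>{1..n} - {k, k + 1, k + 2}. cfun n a A l = 0"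
    using A by (simp add: Omega_e_def)
  then have "cfun_poly n a A u = (\<Sum>l\<in>{k, k + 1, k + 2}. cfun n a A l * u ^ (n - l))" for u
    unfolding cfun_poly_def using k by (intro sum.mono_neutral_right) auto
  moreover define m where "m = n - k - 2"
  then have "n = m + k + 2"
    using k by simp
  ultimately have factor: "cfun_poly n a A u = u ^ m * q u" for u
    by (simp add: q_def power_add power2_eq_square algebra_simps)
  have disc: "0 < cfun n a A k * q u" for u
    using A quadratic_neg_discrim_mult_pos unfolding Omega_e_def q_def by simp
  obtain u0 where "0 \<le> u0" "0 < cfun_poly n a A u0"
    using exists_cfun_poly_pos[OF stable] k by fastforce
  then have "0 < q u0"
    unfolding factor by (simp add: zero_less_mult_iff)
  then have "0 < cfun n a A k"
    using disc[of u0] by (simp add: zero_less_mult_iff)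
  then have q_pos: "0 < q u" for u
    using disc[of u] by (simp add: zero_less_mult_iff)
  show "0 \<le> u \<Longrightarrow> 0 \<le> cfun_poly n a A u" and "0 < u \<Longrightarrow> 0 < cfun_poly n a A u"
    unfolding factor using q_pos[of u] by simp_all
qed

lemma cfun_poly_Omega_pos:
  assumes stable: "hurwitz_stable n a" and "x \<in> Omega n a"
  shows "0 \<le> u \<Longrightarrow> 0 \<le> cfun_poly n a x u" and "0 < u \<Longrightarrow> 0 < cfun_poly n a x u"
proof -
  obtain i j A B t where ij: "1 \<le> i" "i < j" "j \<le> n - 2"
    and A: "A \<in> Omega_e n a i" and B: "B \<in> Omega_e n a j"
    and t: "0 < t" "t < 1" and x: "\<forall>k\<in>{1..n-1}. x k = (1 - t) * A k + t * B k"
    using assms(2) unfolding Omega_def in_open_seg_def by blast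
  have "\<forall>k\<in>{1..n-1}. x k = A k + t * (B k - A k)"
    using x by (simp add: algebra_simps)
  then have convex: "cfun_poly n a x u = (1 - t) * cfun_poly n a A u + t * cfun_poly n a B u"
    by (simp add: cfun_poly_affine algebra_simps)
  have ij2: "i + 2 \<le> n" "j + 2 \<le> n"
    using ij by linarith+
  show "0 \<le> u \<Longrightarrow> 0 \<le> cfun_poly n a x u"
    unfolding convex using t cfun_poly_Omega_e_pos(1)[OF stable ij(1) ij2(1) A]
      cfun_poly_Omega_e_pos(1)[OF stable _ ij2(2) B] ij by simp
  show "0 < u \<Longrightarrow> 0 < cfun_poly n a x u"
    unfolding convex using t cfun_poly_Omega_e_pos(2)[OF stable ij(1) ij2(1) A]
      cfun_poly_Omega_e_pos(2)[OF stable _ ij2(2) B] ij by (simp add: add_pos_pos)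
qed

lemma eventually_perturbation_pos:
  fixes p r :: "real \<Rightarrow> real"
  assumes cont: "continuous_on {0..} p" "continuous_on {0..} r"
    and p_nonneg: "\<And>u. 0 \<le> u \<Longrightarrow> 0 \<le> p u" and p_pos: "\<And>u. 0 < u \<Longrightarrow> 0 < p u"
    and "0 < r 0" and "\<forall>\<^sub>F u in at_top. 0 < r u"
  shows "\<forall>\<^sub>F \<epsilon> in at_right 0. \<forall>u\<ge>0. 0 < p u + \<epsilon> * r u"
proof -
  obtain U where "0 \<le> U" and r_pos: "\<And>u. U \<le> u \<Longrightarrow> 0 < r u"
    using assms(6) unfolding eventually_at_top_linorder by (metis linear order_trans)
  have K: "compact {0..U}" "{0..U} \<noteq> {}" "{0..U} \<subseteq> {0..}"
    using \<open>0 \<le> U\<close> by auto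
  have "continuous_on {0..U} (\<lambda>u. max (p u) (r u))"
    by (intro continuous_on_max continuous_on_subset[OF cont(1) K(3)] continuous_on_subset[OF cont(2) K(3)])
  then obtain u0 where u0: "u0 \<in> {0..U}" and u0_min: "\<And>u. u \<in> {0..U} \<Longrightarrow> max (p u0) (r u0) \<le> max (p u) (r u)"
    using continuous_attains_inf[OF K(1,2)] by blast
  txt \<open>For \<open>\<epsilon> M < m\<close>: where \<open>p \<ge> m\<close> it absorbs \<open>\<epsilon> r\<close>, and elsewhere on \<open>[0, U]\<close> already \<open>r \<ge> m > 0\<close>.\<close>
  define m where "m = max (p u0) (r u0)"
  have "0 < m"
    using u0 p_pos[of u0] \<open>0 < r 0\<close> unfolding m_def by (cases "u0 = 0") auto
  obtain M where "0 < M" and M: "\<And>u. u \<in> {0..U} \<Longrightarrow> \<bar>r u\<bar> \<le> M"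
    using compact_imp_bounded[OF compact_continuous_image[OF continuous_on_subset[OF cont(2) K(3)] K(1)]]
    unfolding bounded_pos by auto
  have "\<forall>\<^sub>F \<epsilon> in at_right 0. 0 < \<epsilon> \<and> \<epsilon> * M < m"
    using \<open>0 < m\<close> \<open>0 < M\<close> unfolding eventually_at_right_field
    by (intro exI[of _ "m / M"]) (auto simp: field_simps)
  then show ?thesis
  proof (rule eventually_mono, intro allI impI)
    fix \<epsilon> u :: real assume \<epsilon>: "0 < \<epsilon> \<and> \<epsilon> * M < m" and "0 \<le> u"
    show "0 < p u + \<epsilon> * r u"
    proof (cases "U \<le> u")
      case True
      then show ?thesis
        using r_pos p_nonneg[OF \<open>0 \<le> u\<close>] \<epsilon> by (simp add: add_nonneg_pos)
    next
      case False
      then have "u \<in> {0..U}"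
        using \<open>0 \<le> u\<close> by simp
      then have "m \<le> p u \<or> m \<le> r u" and "- M \<le> r u"
        using u0_min M unfolding m_def by fastforce+
      then consider "m \<le> p u" "- (\<epsilon> * M) \<le> \<epsilon> * r u" | "0 < r u"
        using \<epsilon> \<open>0 < m\<close> mult_left_mono[of "- M" "r u" \<epsilon>] by fastforce
      then show ?thesis
        using p_nonneg[OF \<open>0 \<le> u\<close>] \<epsilon> by cases (simp_all add: add_nonneg_pos)
    qed
  qed
qed

lemma ceps_eq_mpoly:
  assumes "3 \<le> n"
  shows "ceps n x \<epsilon> = mpoly (n - 1) (\<lambda>k. x k + \<epsilon> * (of_bool (k = n - 1) - of_bool (k = 1)))"
proof
  fix z :: complex
  define x\<epsilon> where "x\<epsilon> k = x k + \<epsilon> * (of_bool (k = n - 1) - of_bool (k = 1))" for k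
  have "{1..n - 1} = insert 1 (insert (n - 1) {2..n - 2})" "1 \<noteq> n - 1" "1 \<notin> {2..n - 2}" "n - 1 \<notin> {2..n - 2}"
    using assms by auto
  then have "(\<Sum>k=1..n - 1. of_real (x\<epsilon> k) * z ^ (n - 1 - k)) =
      of_real (x\<epsilon> 1) * z ^ (n - 2) + of_real (x\<epsilon> (n - 1)) + (\<Sum>k=2..n - 2. of_real (x\<epsilon> k) * z ^ (n - 1 - k))"
    by (simp add: numeral_2_eq_2)
  also have "(\<Sum>k=2..n - 2. of_real (x\<epsilon> k) * z ^ (n - 1 - k)) = (\<Sum>k=2..n - 2. of_real (x k) * z ^ (n - 1 - k))"
    by (rule sum.cong) (auto simp: x\<epsilon>_def)
  finally show "ceps n x \<epsilon> z = mpoly (n - 1) x\<epsilon> z"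
    using assms by (simp add: ceps_def mpoly_def x\<epsilon>_def)
qed

lemma eventually_Re_ceps_div_mpoly_pos:
  assumes stable: "hurwitz_stable n a" and "3 \<le> n" and "x \<in> Omega n a"
  shows "\<forall>\<^sub>F \<epsilon> in at_right 0. \<forall>\<omega>. 0 < Re (ceps n x \<epsilon> (\<i> * of_real \<omega>) / mpoly n a (\<i> * of_real \<omega>))"
proof -
  define e_last :: "nat \<Rightarrow> real" where "e_last k = of_bool (k = n - 1)" for k
  define e_first :: "nat \<Rightarrow> real" where "e_first k = of_bool (k = 1)" for k
  define r where "r = (\<lambda>u. cfun_poly n a e_last u - cfun_poly n a e_first u)"
  have "n - 1 \<noteq> 1" "2 \<le> n" "1 \<le> n"
    using \<open>3 \<le> n\<close> by auto
  have "r 0 = a n"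
    using \<open>n - 1 \<noteq> 1\<close> \<open>2 \<le> n\<close> \<open>1 \<le> n\<close>
    by (simp add: r_def cfun_poly_at_0 cfun_last e_last_def e_first_def)
  moreover have "\<forall>\<^sub>F u in at_top. 0 < r u"
  proof -
    have "r u = (\<Sum>l=1..n. (cfun n a e_last l - cfun n a e_first l) * u ^ (n - l))" for u
      by (simp add: r_def cfun_poly_def sum_subtractf left_diff_distrib)
    moreover have "cfun n a e_last 1 - cfun n a e_first 1 = 1"
      using \<open>n - 1 \<noteq> 1\<close> unfolding cfun_1[OF \<open>2 \<le> n\<close>] by (simp add: e_last_def e_first_def)
    ultimately show ?thesis
      using eventually_sum_powers_pos[OF \<open>1 \<le> n\<close>, of "\<lambda>l. cfun n a e_last l - cfun n a e_first l"] by simp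
  qed
  ultimately have "\<forall>\<^sub>F \<epsilon> in at_right 0. \<forall>u\<ge>0. 0 < cfun_poly n a x u + \<epsilon> * r u"
    using hurwitz_stable_last_coeff_pos[OF stable \<open>1 \<le> n\<close>] cfun_poly_Omega_pos[OF stable \<open>x \<in> Omega n a\<close>]
    unfolding r_def by (intro eventually_perturbation_pos continuous_intros continuous_on_cfun_poly) auto
  then show ?thesis
  proof (rule eventually_mono, intro allI)
    fix \<epsilon> \<omega> assume pos: "\<forall>u\<ge>0. 0 < cfun_poly n a x u + \<epsilon> * r u"
    have "cfun_poly n a (\<lambda>k. x k + \<epsilon> * (e_last k - e_first k)) (\<omega>\<^sup>2) = cfun_poly n a x (\<omega>\<^sup>2) + \<epsilon> * r (\<omega>\<^sup>2)"
      unfolding r_def by (rule cfun_poly_affine) simp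
    with pos show "0 < Re (ceps n x \<epsilon> (\<i> * of_real \<omega>) / mpoly n a (\<i> * of_real \<omega>))"
      unfolding Re_complex_div_gt_0 ceps_eq_mpoly[OF \<open>3 \<le> n\<close>] Re_mpoly_mult_cnj_mpoly[OF \<open>1 \<le> n\<close>]
      by (simp add: e_last_def e_first_def)
  qed
qed

theorem lemma2:
  fixes n :: nat and a b x :: "nat \<Rightarrow> real"
  assumes "n \<ge> 3"
    and "hurwitz_stable n a" and "hurwitz_stable n b"
    and "x \<in> Omega n a \<inter> Omega n b"
  shows "\<exists>\<epsilon>0>0. \<forall>\<epsilon>. 0 < \<epsilon> \<and> \<epsilon> < \<epsilon>0 \<longrightarrow>
           (\<forall>\<omega>::real. Re (ceps n x \<epsilon> (\<i> * complex_of_real \<omega>) / mpoly n a (\<i> * complex_of_real \<omega>)) > 0 \<and>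
                      Re (ceps n x \<epsilon> (\<i> * complex_of_real \<omega>) / mpoly n b (\<i> * complex_of_real \<omega>)) > 0)"
proof -
  have "\<forall>\<^sub>F \<epsilon> in at_right 0. (\<forall>\<omega>. 0 < Re (ceps n x \<epsilon> (\<i> * of_real \<omega>) / mpoly n a (\<i> * of_real \<omega>))) \<and>
      (\<forall>\<omega>. 0 < Re (ceps n x \<epsilon> (\<i> * of_real \<omega>) / mpoly n b (\<i> * of_real \<omega>)))"
    using assms by (intro eventually_conj eventually_Re_ceps_div_mpoly_pos) auto
  then show ?thesis
    unfolding eventually_at_right_field by auto
qed

end
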